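(* Let $\mathbb{K}$ be a field, $m\ge 3$, $R=\mathbb{K}[T_1,\dots,T_m]$, and let $I=\langle T_1^{a_1},\dots,T_m^{a_m},T_1^{b_1}\cdots T_m^{b_m}\rangle\subset R$, where $0\le b_i<a_i$ for all $i$ and $b_i\neq 0$ for at least two indices $i$. Let $L\subset S=R[X_1,\dots,X_m,W]$ be the defining ideal of the Rees algebra of $I$. Then the set $\Gamma_0\cup\Gamma_1$, where $$\Gamma_0=\{\mathcal{P}(X_i,X_j)\mid 1\le j<i\le m+1\},\qquad \Gamma_1=\{\mathcal{P}(W^{|\mathbf{c}|},\mathbf{X}^{\mathbf{c}})\mid \mathbf{0}\neq \mathbf{c}\in\mathbb{N}^m\},$$ is an (infinite) Gröbner basis of $L$ with respect to the monomial order $\tau$.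
   Context: Write $\mathbf{T}^{\mathbf{b}}=T_1^{b_1}\cdots T_m^{b_m}$. Let $\Phi:S\to R[Z]$ be the $R$-algebra homomorphism with $X_i\mapsto T_i^{a_i}Z$ ($1\le i\le m$) and $W\mapsto \mathbf{T}^{\mathbf{b}}Z$; its image is the Rees algebra $\mathcal{R}(I)=\bigoplus_{k\ge0}I^kZ^k$ and $L=\ker\Phi$. Set $X_{m+1}:=W$. For $\mathbf{c}\in\mathbb{N}^m$, $\mathbf{X}^{\mathbf{c}}=X_1^{c_1}\cdots X_m^{c_m}$ and $|\mathbf{c}|=\sum c_i$. Let $\Psi:S\to R$ be the $R$-algebra map with $X_i\mapsto T_i^{a_i}$, $W\mapsto\mathbf{T}^{\mathbf{b}}$. For monomials $M,N$ in $X_1,\dots,X_m,W$ (of the same degree), put $g=\gcd(\Psi(M),\Psi(N))$ and $\mathcal{P}(M,N):=\frac{\Psi(N)}{g}M-\frac{\Psi(M)}{g}N\in L$. The order $\tau$ is the lexicographic order on $S$ with $W>X_m>X_{m-1}>\cdots>X_1>T_1>\cdots>T_m$. *)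

theory Defs
  imports Main "HOL-Library.Poly_Mapping"
begin

text \<open>Variables of the big polynomial ring: T i (i = 1..m), X i (i = 1..m+1, with
  X (m+1) playing the role of W), and the auxiliary Rees variable Z.\<close>
datatype var = T nat | X nat | Z

type_synonym monom = "var \<Rightarrow>\<^sub>0 nat"
type_synonym 'k mpoly = "monom \<Rightarrow>\<^sub>0 'k"

definition Var :: "var \<Rightarrow> 'k::comm_ring_1 mpoly" where
  "Var v = Poly_Mapping.single (Poly_Mapping.single v 1) 1"

definition Mono :: "monom \<Rightarrow> 'k::comm_ring_1 mpoly" where
  "Mono e = Poly_Mapping.single e 1"

definition Const :: "'k::comm_ring_1 \<Rightarrow> 'k mpoly" where
  "Const c = Poly_Mapping.single 0 c"

definition subst :: "(var \<Rightarrow> 'k::comm_ring_1 mpoly) \<Rightarrow> 'k mpoly \<Rightarrow> 'k mpoly" where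
  "subst \<sigma> p = (\<Sum>mu\<in>Poly_Mapping.keys p. Const (Poly_Mapping.lookup p mu) * (\<Prod>v\<in>Poly_Mapping.keys (mu::monom). \<sigma> v ^ (Poly_Mapping.lookup mu v)))"

definition Svars :: "nat \<Rightarrow> var set" where
  "Svars m = {T i | i. 1 \<le> i \<and> i \<le> m} \<union> {X i | i. 1 \<le> i \<and> i \<le> m + 1}"

definition in_S :: "nat \<Rightarrow> 'k::comm_ring_1 mpoly \<Rightarrow> bool" where
  "in_S m p \<longleftrightarrow> (\<forall>t\<in>Poly_Mapping.keys p. Poly_Mapping.keys t \<subseteq> Svars m)"

definition Tb :: "nat \<Rightarrow> (nat \<Rightarrow> nat) \<Rightarrow> 'k::comm_ring_1 mpoly" where
  "Tb m b = (\<Prod>i=1..m. Var (T i) ^ b i)"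

definition Phi_img :: "nat \<Rightarrow> (nat \<Rightarrow> nat) \<Rightarrow> (nat \<Rightarrow> nat) \<Rightarrow> var \<Rightarrow> 'k::comm_ring_1 mpoly" where
  "Phi_img m a b v = (case v of
       T i \<Rightarrow> Var (T i)
     | X i \<Rightarrow> (if i \<le> m then Var (T i) ^ a i * Var Z else Tb m b * Var Z)
     | Z \<Rightarrow> Var Z)"

definition Phi :: "nat \<Rightarrow> (nat \<Rightarrow> nat) \<Rightarrow> (nat \<Rightarrow> nat) \<Rightarrow> 'k::comm_ring_1 mpoly \<Rightarrow> 'k mpoly" where
  "Phi m a b = subst (Phi_img m a b)"

definition reesL :: "nat \<Rightarrow> (nat \<Rightarrow> nat) \<Rightarrow> (nat \<Rightarrow> nat) \<Rightarrow> 'k::comm_ring_1 mpoly set" where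
  "reesL m a b = {p. in_S m p \<and> Phi m a b p = 0}"

definition psi_exp :: "nat \<Rightarrow> (nat \<Rightarrow> nat) \<Rightarrow> (nat \<Rightarrow> nat) \<Rightarrow> monom \<Rightarrow> monom" where
  "psi_exp m a b M =
     (\<Sum>i=1..m. Poly_Mapping.single (T i) (a i * Poly_Mapping.lookup M (X i) + b i * Poly_Mapping.lookup M (X (m+1))))"

text \<open>Exponent of Psi(N)/gcd(Psi(M),Psi(N)); since exponents are in T_1..T_m,
  e_N - min(e_N,e_M) = e_N - e_M (truncated) componentwise.\<close>
definition quot_exp :: "nat \<Rightarrow> monom \<Rightarrow> monom \<Rightarrow> monom" where
  "quot_exp m eN eM = (\<Sum>i=1..m. Poly_Mapping.single (T i) (Poly_Mapping.lookup eN (T i) - Poly_Mapping.lookup eM (T i)))"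

definition Pbin :: "nat \<Rightarrow> (nat \<Rightarrow> nat) \<Rightarrow> (nat \<Rightarrow> nat) \<Rightarrow> monom \<Rightarrow> monom \<Rightarrow> 'k::comm_ring_1 mpoly" where
  "Pbin m a b M N =
     Mono (quot_exp m (psi_exp m a b N) (psi_exp m a b M)) * Mono M
   - Mono (quot_exp m (psi_exp m a b M) (psi_exp m a b N)) * Mono N"

definition Xexp :: "nat \<Rightarrow> (nat \<Rightarrow> nat) \<Rightarrow> monom" where
  "Xexp m c = (\<Sum>i=1..m. Poly_Mapping.single (X i) (c i))"

definition Gamma0 :: "nat \<Rightarrow> (nat \<Rightarrow> nat) \<Rightarrow> (nat \<Rightarrow> nat) \<Rightarrow> 'k::comm_ring_1 mpoly set" where
  "Gamma0 m a b = {Pbin m a b (Poly_Mapping.single (X i) 1) (Poly_Mapping.single (X j) 1)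
                    | i j. 1 \<le> j \<and> j < i \<and> i \<le> m + 1}"

definition Gamma1 :: "nat \<Rightarrow> (nat \<Rightarrow> nat) \<Rightarrow> (nat \<Rightarrow> nat) \<Rightarrow> 'k::comm_ring_1 mpoly set" where
  "Gamma1 m a b = {Pbin m a b (Poly_Mapping.single (X (m+1)) (\<Sum>i=1..m. c i)) (Xexp m c)
                    | c. (\<exists>i\<in>{1..m}. c i \<noteq> 0)}"

fun var_gt :: "var \<Rightarrow> var \<Rightarrow> bool" where
  "var_gt (X i) (X j) = (i > j)"
| "var_gt (X i) (T j) = True"
| "var_gt (X i) Z = True"
| "var_gt (T i) (T j) = (i < j)"
| "var_gt (T i) Z = True"
| "var_gt _ _ = False"

definition lex_less :: "monom \<Rightarrow> monom \<Rightarrow> bool" where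
  "lex_less s t \<longleftrightarrow> (\<exists>v. Poly_Mapping.lookup s v < Poly_Mapping.lookup t v \<and> (\<forall>u. var_gt u v \<longrightarrow> Poly_Mapping.lookup s u = Poly_Mapping.lookup t u))"

definition lead_mon :: "'k::zero mpoly \<Rightarrow> monom" where
  "lead_mon p = (THE t. t \<in> Poly_Mapping.keys p \<and> (\<forall>s\<in>Poly_Mapping.keys p. s \<noteq> t \<longrightarrow> lex_less s t))"

definition mon_dvd :: "monom \<Rightarrow> monom \<Rightarrow> bool" where
  "mon_dvd s t \<longleftrightarrow> (\<forall>v. Poly_Mapping.lookup s v \<le> Poly_Mapping.lookup t v)"

definition is_groebner_basis :: "'k::zero mpoly set \<Rightarrow> 'k mpoly set \<Rightarrow> bool" where
  "is_groebner_basis G I \<longleftrightarrow> G \<subseteq> I \<and>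
     (\<forall>f\<in>I. f \<noteq> 0 \<longrightarrow> (\<exists>g\<in>G. g \<noteq> 0 \<and> mon_dvd (lead_mon g) (lead_mon f)))"

end

theory Submission
  imports Defs
begin

text \<open>The ideal L is the kernel of a monomial map, so its initial ideal is spanned by the larger
  monomials u of the pairs t < u with the same image under Phi. Look at the tau-largest variable
  where t and u differ. It cannot be a T_i, since the T_i-exponent of the image would differ. If it
  is X_i with i \<le> m, equality of the Z-degrees forces t to exceed u in some X_j with j < i, and
  comparing T_j-exponents of the images gives T_j^{a_j} X_i | u, the leading monomial of
  P(X_i, X_j). If it is W, the surplus \<delta> of W in u is balanced by a surplus of X's in t; spreading
  \<delta> over these X's gives c with |c| = \<delta> such that the leading monomial of P(W^\<delta>, X^c)
  divides u.\<close>

abbreviation lookup :: "('a \<Rightarrow>\<^sub>0 'b::zero) \<Rightarrow> 'a \<Rightarrow> 'b" where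
  "lookup \<equiv> Poly_Mapping.lookup"

abbreviation keys :: "('a \<Rightarrow>\<^sub>0 'b::zero) \<Rightarrow> 'a set" where
  "keys \<equiv> Poly_Mapping.keys"

abbreviation single :: "'a \<Rightarrow> 'b::zero \<Rightarrow> 'a \<Rightarrow>\<^sub>0 'b" where
  "single \<equiv> Poly_Mapping.single"

abbreviation W :: "nat \<Rightarrow> var" where
  "W m \<equiv> X (m + 1)"

lemma sum_eq_imp_greater_elsewhere:
  fixes f g :: "'a \<Rightarrow> 'b::{ordered_cancel_comm_monoid_add, linorder}"
  assumes "finite A" and "sum f A = sum g A" and "i \<in> A" and "f i < g i"
  shows "\<exists>j\<in>A. g j < f j"
proof (rule ccontr)
  assume "\<not> ?thesis"
  then have "sum f A < sum g A"
    using assms by (intro sum_strict_mono_ex1) (auto simp: not_less)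
  with assms(2) show False
    by simp
qed

lemma exists_sum_eq_bounded:
  fixes e :: "'a \<Rightarrow> nat"
  assumes "finite A" and "d \<le> sum e A"
  shows "\<exists>c. (\<forall>j. c j \<le> e j) \<and> sum c A = d"
  using assms
proof (induction A arbitrary: d rule: finite_induct)
  case empty
  then show ?case
    by (intro exI[of _ "\<lambda>_. 0"]) simp
next
  case (insert x A)
  have "d - min d (e x) \<le> sum e A"
    using insert by auto
  then obtain c where c: "\<forall>j. c j \<le> e j" "sum c A = d - min d (e x)"
    using insert.IH by blast
  have "sum (c(x := min d (e x))) A = sum c A"
    using insert.hyps by (intro sum.cong) auto
  with c insert.hyps show ?case
    by (intro exI[of _ "c(x := min d (e x))"]) auto
qed

lemma Mono_mult: "Mono s * Mono t = (Mono (s + t) :: 'k::comm_ring_1 mpoly)"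
  by (simp add: Mono_def mult_single)

definition monom_pow :: "nat \<Rightarrow> monom \<Rightarrow> monom" where
  "monom_pow n e = (\<Sum>_<n. e)"

lemma lookup_monom_pow [simp]: "lookup (monom_pow n e) v = n * lookup e v"
  by (simp add: monom_pow_def lookup_sum)

lemma monom_pow_single: "monom_pow n (single v k) = single v (n * k)"
  by (rule poly_mapping_eqI) (simp add: lookup_single when_def)

lemma Mono_power: "Mono e ^ n = (Mono (monom_pow n e) :: 'k::comm_ring_1 mpoly)"
  by (induction n) (simp_all add: monom_pow_def Mono_def mult_single add.commute)

lemma Mono_prod:
  "finite A \<Longrightarrow> (\<Prod>v\<in>A. Mono (f v)) = (Mono (\<Sum>v\<in>A. f v) :: 'k::comm_ring_1 mpoly)"
  by (induction rule: finite_induct) (simp_all add: Mono_mult, simp add: Mono_def)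

lemma Var_power: "Var v ^ n = (Mono (single v n) :: 'k::comm_ring_1 mpoly)"
  by (simp add: Var_def Mono_def[symmetric] Mono_power monom_pow_single)

definition Phi_var_exp :: "nat \<Rightarrow> (nat \<Rightarrow> nat) \<Rightarrow> (nat \<Rightarrow> nat) \<Rightarrow> var \<Rightarrow> monom" where
  "Phi_var_exp m a b v = (case v of
       T i \<Rightarrow> single (T i) 1
     | X i \<Rightarrow> (if i \<le> m then single (T i) (a i) else (\<Sum>j=1..m. single (T j) (b j))) + single Z 1
     | Z \<Rightarrow> single Z 1)"

lemma Phi_img_eq_Mono: "Phi_img m a b v = (Mono (Phi_var_exp m a b v) :: 'k::comm_ring_1 mpoly)"
  by (cases v) (simp_all add: Phi_img_def Phi_var_exp_def Tb_def Var_power Mono_prod Mono_mult,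
      simp_all add: Var_def Mono_def mult_single)

definition Phi_exp :: "nat \<Rightarrow> (nat \<Rightarrow> nat) \<Rightarrow> (nat \<Rightarrow> nat) \<Rightarrow> monom \<Rightarrow> monom" where
  "Phi_exp m a b t = (\<Sum>v\<in>keys t. monom_pow (lookup t v) (Phi_var_exp m a b v))"

lemma Phi_eq_sum_single:
  "Phi m a b p = (\<Sum>t\<in>keys p. single (Phi_exp m a b t) (lookup p t) :: 'k::comm_ring_1 mpoly)"
proof -
  have "Const c * Mono e = (single e c :: 'k mpoly)" for c e
    by (simp add: Const_def Mono_def mult_single)
  then show ?thesis
    unfolding Phi_def subst_def by (simp add: Phi_img_eq_Mono Mono_power Mono_prod Phi_exp_def)
qed

lemma Phi_binomial:
  "Phi m a b (single x 1 - single y 1 :: 'k::comm_ring_1 mpoly)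
     = single (Phi_exp m a b x) 1 - single (Phi_exp m a b y) 1"
proof (cases "x = y")
  case True
  then show ?thesis
    by (simp add: Phi_eq_sum_single)
next
  case False
  then have "keys (single x 1 - single y 1 :: 'k mpoly) = {x, y}"
    by (auto simp: in_keys_iff lookup_minus lookup_single when_def split: if_splits)
  with False show ?thesis
    by (simp add: Phi_eq_sum_single lookup_minus lookup_single single_uminus)
qed

lemma Phi_eq_0_imp_collision:
  assumes "Phi m a b p = (0 :: 'k::comm_ring_1 mpoly)" and "u \<in> keys p"
  shows "\<exists>t\<in>keys p. t \<noteq> u \<and> Phi_exp m a b t = Phi_exp m a b u"
proof (rule ccontr)
  assume no_collision: "\<not> ?thesis"
  have "lookup (Phi m a b p) (Phi_exp m a b u)
      = (\<Sum>t\<in>keys p. if Phi_exp m a b t = Phi_exp m a b u then lookup p t else 0)"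
    by (simp add: Phi_eq_sum_single lookup_sum lookup_single when_def eq_commute)
  also have "\<dots> = lookup p u"
    using assms(2) no_collision by (simp add: sum.remove) (intro sum.neutral, auto)
  finally have "lookup (Phi m a b p) (Phi_exp m a b u) = lookup p u" .
  with assms show False
    by (simp add: in_keys_iff)
qed

lemma Svars_eq: "Svars m = T ` {1..m} \<union> X ` {1..m+1}"
  unfolding Svars_def by auto

lemma lookup_Phi_exp:
  assumes "keys t \<subseteq> Svars m"
  shows "lookup (Phi_exp m a b t) w =
    (case w of
      T i \<Rightarrow> if i \<in> {1..m} then lookup t (T i) + a i * lookup t (X i) + b i * lookup t (W m) else 0
    | X _ \<Rightarrow> 0
    | Z \<Rightarrow> (\<Sum>j=1..m+1. lookup t (X j)))"
proof -
  have "lookup (Phi_exp m a b t) w = (\<Sum>v\<in>keys t. lookup t v * lookup (Phi_var_exp m a b v) w)"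
    by (simp add: Phi_exp_def lookup_sum)
  also have "\<dots> = (\<Sum>v\<in>Svars m. lookup t v * lookup (Phi_var_exp m a b v) w)"
    by (rule sum.mono_neutral_left) (use assms in \<open>auto simp: Svars_def in_keys_iff\<close>)
  also have "\<dots> = (\<Sum>j=1..m. lookup t (T j) * lookup (Phi_var_exp m a b (T j)) w)
      + (\<Sum>j=1..m+1. lookup t (X j) * lookup (Phi_var_exp m a b (X j)) w)"
    unfolding Svars_eq by (subst sum.union_disjoint) (auto simp: sum.reindex inj_on_def)
  also have "\<dots> = (case w of
      T i \<Rightarrow> if i \<in> {1..m} then lookup t (T i) + a i * lookup t (X i) + b i * lookup t (W m) else 0
    | X _ \<Rightarrow> 0
    | Z \<Rightarrow> (\<Sum>j=1..m+1. lookup t (X j)))"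
    by (cases w) (auto simp: Phi_var_exp_def lookup_add lookup_sum lookup_single when_def
        if_distrib[of "(*) _"] algebra_simps cong: if_cong)
  finally show ?thesis .
qed

lemma Phi_exp_eq_iff:
  assumes "keys t \<subseteq> Svars m" and "keys u \<subseteq> Svars m"
  shows "Phi_exp m a b t = Phi_exp m a b u \<longleftrightarrow>
    (\<forall>i\<in>{1..m}. lookup t (T i) + a i * lookup t (X i) + b i * lookup t (W m)
              = lookup u (T i) + a i * lookup u (X i) + b i * lookup u (W m))
    \<and> (\<Sum>j=1..m+1. lookup t (X j)) = (\<Sum>j=1..m+1. lookup u (X j))"
  (is "_ \<longleftrightarrow> ?T \<and> ?Z")
proof
  assume "Phi_exp m a b t = Phi_exp m a b u"
  then have eq: "lookup (Phi_exp m a b t) w = lookup (Phi_exp m a b u) w" for w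
    by simp
  have ?T
  proof
    fix i assume "i \<in> {1..m}"
    then show "lookup t (T i) + a i * lookup t (X i) + b i * lookup t (W m)
             = lookup u (T i) + a i * lookup u (X i) + b i * lookup u (W m)"
      using eq[of "T i"] assms by (simp add: lookup_Phi_exp)
  qed
  moreover have ?Z
    using eq[of Z] assms by (simp add: lookup_Phi_exp)
  ultimately show "?T \<and> ?Z" ..
next
  assume "?T \<and> ?Z"
  then show "Phi_exp m a b t = Phi_exp m a b u"
    using assms by (intro poly_mapping_eqI) (simp add: lookup_Phi_exp split: var.split)
qed

text \<open>A variable that is larger for tau is smaller in this order, so that the library's
  lexicographic order on monomials, decided at the least key where they differ, is lex_less.\<close>

instantiation var :: linorder
begin

definition less_var :: "var \<Rightarrow> var \<Rightarrow> bool" where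
  "u < v \<longleftrightarrow> var_gt u v"

definition less_eq_var :: "var \<Rightarrow> var \<Rightarrow> bool" where
  "u \<le> v \<longleftrightarrow> var_gt u v \<or> u = v"

instance
proof
  fix u v w :: var
  show "u < v \<longleftrightarrow> u \<le> v \<and> \<not> v \<le> u"
    unfolding less_var_def less_eq_var_def by (cases u; cases v) auto
  show "u \<le> u"
    unfolding less_eq_var_def by simp
  show "u \<le> v \<Longrightarrow> v \<le> w \<Longrightarrow> u \<le> w"
    unfolding less_eq_var_def by (cases u; cases v; cases w) auto
  show "u \<le> v \<Longrightarrow> v \<le> u \<Longrightarrow> u = v"
    unfolding less_eq_var_def by (cases u; cases v) auto
  show "u \<le> v \<or> v \<le> u"
    unfolding less_eq_var_def by (cases u; cases v) auto
qed
end

lemma lex_less_iff_less: "lex_less s t \<longleftrightarrow> s < t"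
  by (simp add: lex_less_def less_poly_mapping.rep_eq less_fun_def less_var_def)

lemma lead_mon_eq_Max:
  assumes "p \<noteq> 0"
  shows "lead_mon p = Max (keys p)"
  unfolding lead_mon_def lex_less_iff_less
proof (rule the_equality)
  have "keys p \<noteq> {}"
    using assms by simp
  then show "Max (keys p) \<in> keys p \<and> (\<forall>s\<in>keys p. s \<noteq> Max (keys p) \<longrightarrow> s < Max (keys p))"
    by (simp add: order.not_eq_order_implies_strict)
next
  fix t assume "t \<in> keys p \<and> (\<forall>s\<in>keys p. s \<noteq> t \<longrightarrow> s < t)"
  then show "t = Max (keys p)"
    by (intro Max_eqI[symmetric]) auto
qed

lemma lead_mon_binomial:
  assumes "y < x"
  shows "single x 1 - single y 1 \<noteq> (0 :: 'k::comm_ring_1 mpoly)"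
    and "lead_mon (single x 1 - single y 1 :: 'k::comm_ring_1 mpoly) = x"
proof -
  have keys: "keys (single x 1 - single y 1 :: 'k mpoly) = {x, y}"
    using assms by (auto simp: in_keys_iff lookup_minus lookup_single when_def split: if_splits)
  then show "single x 1 - single y 1 \<noteq> (0 :: 'k mpoly)"
    by auto
  then show "lead_mon (single x 1 - single y 1 :: 'k mpoly) = x"
    using assms by (simp add: lead_mon_eq_Max keys)
qed

lemma less_X_imp_X: "v < X k \<Longrightarrow> \<exists>j. v = X j \<and> k < j"
  by (cases v) (auto simp: less_var_def)

lemma less_single_X:
  assumes "0 < n" and "\<And>k. i \<le> k \<Longrightarrow> lookup M (X k) = 0"
  shows "M < single (X i) n"
  unfolding less_poly_mapping.rep_eq less_fun_def
proof (intro exI conjI allI impI)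
  show "lookup M (X i) < lookup (single (X i) n) (X i)"
    using assms by simp
  show "lookup M w = lookup (single (X i) n) w" if "w < X i" for w
    using less_X_imp_X[OF that] assms(2) by (auto simp: lookup_single)
qed

definition Pbin_mon :: "nat \<Rightarrow> (nat \<Rightarrow> nat) \<Rightarrow> (nat \<Rightarrow> nat) \<Rightarrow> monom \<Rightarrow> monom \<Rightarrow> monom" where
  "Pbin_mon m a b M N = quot_exp m (psi_exp m a b N) (psi_exp m a b M) + M"

lemma Pbin_eq_binomial:
  "Pbin m a b M N = single (Pbin_mon m a b M N) 1 - (single (Pbin_mon m a b N M) 1 :: 'k::comm_ring_1 mpoly)"
  by (simp add: Pbin_def Pbin_mon_def Mono_mult) (simp add: Mono_def)

lemma lookup_psi_exp:
  "lookup (psi_exp m a b M) w = (case w of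
      T l \<Rightarrow> if l \<in> {1..m} then a l * lookup M (X l) + b l * lookup M (W m) else 0
    | _ \<Rightarrow> 0)"
  by (cases w) (auto simp: psi_exp_def lookup_sum lookup_single when_def)

lemma lookup_outside_X:
  assumes "keys M \<subseteq> X ` A"
  shows "lookup M (T l) = 0" and "lookup M Z = 0" and "lookup M (X k) \<noteq> 0 \<Longrightarrow> k \<in> A"
  using assms by (auto simp: not_in_keys_iff_lookup_eq_zero[symmetric])

lemma lookup_Pbin_mon:
  assumes "keys M \<subseteq> X ` A"
  shows "lookup (Pbin_mon m a b M N) w = (case w of
      T l \<Rightarrow> lookup (psi_exp m a b N) (T l) - lookup (psi_exp m a b M) (T l)
    | _ \<Rightarrow> lookup M w)"
  using lookup_outside_X[OF assms]
  by (cases w) (auto simp: Pbin_mon_def quot_exp_def lookup_add lookup_sum lookup_single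
        when_def lookup_psi_exp)

lemma keys_Pbin_mon:
  assumes "keys M \<subseteq> X ` {1..m+1}"
  shows "keys (Pbin_mon m a b M N) \<subseteq> Svars m"
proof
  fix v assume "v \<in> keys (Pbin_mon m a b M N)"
  then have nz: "lookup (Pbin_mon m a b M N) v \<noteq> 0"
    by (simp add: in_keys_iff)
  show "v \<in> Svars m"
  proof (cases v)
    case (T l)
    with nz show ?thesis
      by (auto simp: Svars_def lookup_Pbin_mon[OF assms] lookup_psi_exp split: if_splits)
  next
    case (X k)
    with nz have "lookup M (X k) \<noteq> 0"
      by (simp add: lookup_Pbin_mon[OF assms])
    with X show ?thesis
      using lookup_outside_X(3)[OF assms] by (auto simp: Svars_def)
  next
    case Z
    with nz show ?thesis
      by (simp add: lookup_Pbin_mon[OF assms] lookup_outside_X[OF assms])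
  qed
qed

lemma Pbin_in_reesL:
  assumes KM: "keys M \<subseteq> X ` {1..m+1}" and KN: "keys N \<subseteq> X ` {1..m+1}"
    and deg: "(\<Sum>j=1..m+1. lookup M (X j)) = (\<Sum>j=1..m+1. lookup N (X j))"
  shows "(Pbin m a b M N :: 'k::comm_ring_1 mpoly) \<in> reesL m a b"
proof -
  define x where "x = Pbin_mon m a b M N"
  define y where "y = Pbin_mon m a b N M"
  have lx: "lookup x w = (case w of
      T l \<Rightarrow> lookup (psi_exp m a b N) (T l) - lookup (psi_exp m a b M) (T l) | _ \<Rightarrow> lookup M w)" for w
    unfolding x_def by (rule lookup_Pbin_mon[OF KM])
  have ly: "lookup y w = (case w of
      T l \<Rightarrow> lookup (psi_exp m a b M) (T l) - lookup (psi_exp m a b N) (T l) | _ \<Rightarrow> lookup N w)" for w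
    unfolding y_def by (rule lookup_Pbin_mon[OF KN])
  have S: "keys x \<subseteq> Svars m" "keys y \<subseteq> Svars m"
    unfolding x_def y_def using KM KN by (simp_all add: keys_Pbin_mon)
  have "lookup x (T i) + a i * lookup x (X i) + b i * lookup x (W m)
      = max (lookup (psi_exp m a b M) (T i)) (lookup (psi_exp m a b N) (T i))"
    "lookup y (T i) + a i * lookup y (X i) + b i * lookup y (W m)
      = max (lookup (psi_exp m a b M) (T i)) (lookup (psi_exp m a b N) (T i))"
    if "i \<in> {1..m}" for i
    using that by (auto simp: lx ly lookup_psi_exp max_def)
  then have "Phi_exp m a b x = Phi_exp m a b y"
    using deg S by (simp add: Phi_exp_eq_iff lx ly)
  moreover have "keys (single x 1 - single y 1 :: 'k mpoly) \<subseteq> {x, y}"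
    by (auto simp: in_keys_iff lookup_minus lookup_single when_def split: if_splits)
  ultimately show ?thesis
    using S unfolding reesL_def in_S_def Pbin_eq_binomial x_def[symmetric] y_def[symmetric]
    by (auto simp: Phi_binomial)
qed

lemma Pbin_mon_less:
  assumes KM: "keys M \<subseteq> range X" and KN: "keys N \<subseteq> range X" and "N < M"
  shows "Pbin_mon m a b N M < Pbin_mon m a b M N"
proof -
  obtain v where v: "lookup N v < lookup M v" "\<And>w. w < v \<Longrightarrow> lookup N w = lookup M w"
    using \<open>N < M\<close> by (auto simp: less_poly_mapping.rep_eq less_fun_def)
  then obtain k where k: "v = X k"
    using lookup_outside_X[OF KM] by (cases v) auto
  show ?thesis
    unfolding less_poly_mapping.rep_eq less_fun_def
  proof (intro exI conjI allI impI)
    show "lookup (Pbin_mon m a b N M) v < lookup (Pbin_mon m a b M N) v"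
      using v(1) k by (simp add: lookup_Pbin_mon[OF KM] lookup_Pbin_mon[OF KN])
    show "lookup (Pbin_mon m a b N M) w = lookup (Pbin_mon m a b M N) w" if "w < v" for w
      using that v(2) k less_X_imp_X[of w k]
      by (auto simp: lookup_Pbin_mon[OF KM] lookup_Pbin_mon[OF KN])
  qed
qed

lemma lead_mon_Pbin:
  assumes "keys M \<subseteq> range X" and "keys N \<subseteq> range X" and "N < M"
  shows "Pbin m a b M N \<noteq> (0 :: 'k::comm_ring_1 mpoly)"
    and "lead_mon (Pbin m a b M N :: 'k::comm_ring_1 mpoly) = Pbin_mon m a b M N"
  unfolding Pbin_eq_binomial using lead_mon_binomial[OF Pbin_mon_less[OF assms]] by simp_all

lemma lookup_Xexp: "lookup (Xexp m c) w = (case w of X k \<Rightarrow> if k \<in> {1..m} then c k else 0 | _ \<Rightarrow> 0)"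
  by (cases w) (auto simp: Xexp_def lookup_sum lookup_single when_def)

lemma Gamma0_subset_reesL: "Gamma0 m a b \<subseteq> (reesL m a b :: 'k::comm_ring_1 mpoly set)"
  unfolding Gamma0_def by (auto intro!: Pbin_in_reesL simp: lookup_single when_def)

lemma Gamma1_subset_reesL: "Gamma1 m a b \<subseteq> (reesL m a b :: 'k::comm_ring_1 mpoly set)"
proof
  fix g :: "'k mpoly" assume "g \<in> Gamma1 m a b"
  then obtain c where g: "g = Pbin m a b (single (W m) (\<Sum>i=1..m. c i)) (Xexp m c)"
    unfolding Gamma1_def by blast
  have "keys (Xexp m c) \<subseteq> X ` {1..m+1}"
    by (auto simp: in_keys_iff lookup_Xexp split: var.splits if_splits)
  moreover have "(\<Sum>k=1..m+1. lookup (Xexp m c) (X k)) = (\<Sum>i=1..m. c i)"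
    by (simp add: lookup_Xexp)
  ultimately show "g \<in> reesL m a b"
    unfolding g by (intro Pbin_in_reesL) (auto simp: lookup_single when_def)
qed

lemma exists_Gamma0_lead_dvd:
  assumes St: "keys t \<subseteq> Svars m" and Su: "keys u \<subseteq> Svars m"
    and same_image: "Phi_exp m a b t = Phi_exp m a b u"
    and i: "i \<in> {1..m}" and less: "lookup t (X i) < lookup u (X i)"
    and above: "\<And>k. i < k \<Longrightarrow> lookup t (X k) = lookup u (X k)"
  shows "\<exists>g\<in>Gamma0 m a b. g \<noteq> (0 :: 'k::comm_ring_1 mpoly) \<and> mon_dvd (lead_mon g) u"
proof -
  have deg: "(\<Sum>k=1..m+1. lookup t (X k)) = (\<Sum>k=1..m+1. lookup u (X k))"
    and weight: "\<And>l. l \<in> {1..m} \<Longrightarrow> lookup t (T l) + a l * lookup t (X l) + b l * lookup t (W m)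
                   = lookup u (T l) + a l * lookup u (X l) + b l * lookup u (W m)"
    using same_image by (simp_all add: Phi_exp_eq_iff[OF St Su])
  obtain j where j: "j \<in> {1..m+1}" "lookup u (X j) < lookup t (X j)"
    using sum_eq_imp_greater_elsewhere[OF _ deg, of i] i less by auto
  have "\<not> i < j" and "j \<noteq> i"
    using above[of j] j(2) less by auto
  then have "j < i"
    by simp
  have "a j * (lookup u (X j) + 1) \<le> a j * lookup t (X j)"
    using j(2) by (intro mult_le_mono2) simp
  with weight[of j] above[of "m+1"] i j(1) \<open>j < i\<close>
  have aj: "a j \<le> lookup u (T j)"
    by (simp add: algebra_simps)
  define M where "M = single (X i) (1::nat)"
  define N where "N = single (X j) (1::nat)"
  have KX: "keys M \<subseteq> range X" "keys N \<subseteq> range X"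
    by (simp_all add: M_def N_def)
  have "N < M"
    unfolding M_def N_def using \<open>j < i\<close> by (intro less_single_X) (auto simp: lookup_single)
  define g :: "'k mpoly" where "g = Pbin m a b M N"
  have "1 \<le> j" "j < i" "i \<le> m + 1"
    using i j(1) \<open>j < i\<close> by auto
  then have "g \<in> Gamma0 m a b"
    unfolding g_def M_def N_def Gamma0_def by blast
  have "g \<noteq> 0" and lead: "lead_mon g = Pbin_mon m a b M N"
    unfolding g_def by (fact lead_mon_Pbin[OF KX \<open>N < M\<close>])+
  have "lookup (Pbin_mon m a b M N) w
      = (case w of T l \<Rightarrow> if l = j then a j else 0 | X k \<Rightarrow> if k = i then 1 else 0 | Z \<Rightarrow> 0)" for w
    unfolding lookup_Pbin_mon[OF KX(1)] using i j(1) \<open>j < i\<close>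
    by (cases w) (auto simp: lookup_psi_exp lookup_single M_def N_def)
  then have "mon_dvd (lead_mon g) u"
    using aj less by (auto simp: mon_dvd_def lead split: var.split)
  with \<open>g \<in> Gamma0 m a b\<close> \<open>g \<noteq> 0\<close> show ?thesis
    by blast
qed

lemma exists_Gamma1_lead_dvd:
  assumes St: "keys t \<subseteq> Svars m" and Su: "keys u \<subseteq> Svars m"
    and same_image: "Phi_exp m a b t = Phi_exp m a b u"
    and less: "lookup t (W m) < lookup u (W m)"
  shows "\<exists>g\<in>Gamma1 m a b. g \<noteq> (0 :: 'k::comm_ring_1 mpoly) \<and> mon_dvd (lead_mon g) u"
proof -
  have deg: "(\<Sum>k=1..m+1. lookup t (X k)) = (\<Sum>k=1..m+1. lookup u (X k))"
    and weight: "\<And>l. l \<in> {1..m} \<Longrightarrow> lookup t (T l) + a l * lookup t (X l) + b l * lookup t (W m)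
                   = lookup u (T l) + a l * lookup u (X l) + b l * lookup u (W m)"
    using same_image by (simp_all add: Phi_exp_eq_iff[OF St Su])
  define \<delta> where "\<delta> = lookup u (W m) - lookup t (W m)"
  have uW: "lookup u (W m) = lookup t (W m) + \<delta>" and "0 < \<delta>"
    using less by (simp_all add: \<delta>_def)
  have "(\<Sum>k=1..m. lookup t (X k)) = (\<Sum>k=1..m. lookup u (X k)) + \<delta>"
    using deg uW by simp
  moreover have "(\<Sum>k=1..m. lookup t (X k)) \<le> (\<Sum>k=1..m. lookup u (X k) + (lookup t (X k) - lookup u (X k)))"
    by (intro sum_mono) simp
  ultimately have "\<delta> \<le> (\<Sum>k=1..m. lookup t (X k) - lookup u (X k))"
    by (simp add: sum.distrib)
  then obtain c where c: "\<And>k. c k \<le> lookup t (X k) - lookup u (X k)" "(\<Sum>k=1..m. c k) = \<delta>"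
    using exists_sum_eq_bounded[of "{1..m}"] by blast
  with \<open>0 < \<delta>\<close> have "\<exists>k\<in>{1..m}. c k \<noteq> 0"
    by (metis less_irrefl sum.neutral)
  define M where "M = single (W m) \<delta>"
  define N where "N = Xexp m c"
  have KX: "keys M \<subseteq> range X" "keys N \<subseteq> range X"
    by (auto simp: M_def N_def in_keys_iff lookup_Xexp split: var.splits)
  have "N < M"
    unfolding M_def N_def using \<open>0 < \<delta>\<close> by (intro less_single_X) (auto simp: lookup_Xexp)
  define g :: "'k mpoly" where "g = Pbin m a b M N"
  have "g \<in> Gamma1 m a b"
    unfolding g_def M_def N_def Gamma1_def c(2)[symmetric] using \<open>\<exists>k\<in>{1..m}. c k \<noteq> 0\<close> by blast
  have "g \<noteq> 0" and lead: "lead_mon g = Pbin_mon m a b M N"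
    unfolding g_def by (fact lead_mon_Pbin[OF KX \<open>N < M\<close>])+
  have "lookup (Pbin_mon m a b M N) w
      = (case w of T l \<Rightarrow> if l \<in> {1..m} then a l * c l - b l * \<delta> else 0
           | X k \<Rightarrow> if k = m + 1 then \<delta> else 0 | Z \<Rightarrow> 0)" for w
    unfolding lookup_Pbin_mon[OF KX(1)]
    by (cases w) (auto simp: lookup_psi_exp lookup_single lookup_Xexp M_def N_def)
  moreover have "a l * c l - b l * \<delta> \<le> lookup u (T l)" if "l \<in> {1..m}" for l
  proof -
    have "a l * c l \<le> a l * (lookup t (X l) - lookup u (X l))"
      using c(1) by (intro mult_le_mono2)
    also have "\<dots> = a l * lookup t (X l) - a l * lookup u (X l)"
      by (simp add: diff_mult_distrib2)
    also have "\<dots> \<le> lookup u (T l) + b l * \<delta>"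
      using weight[OF that] uW by (simp add: algebra_simps)
    finally show ?thesis
      by simp
  qed
  ultimately have "mon_dvd (lead_mon g) u"
    using uW by (auto simp: mon_dvd_def lead split: var.split)
  with \<open>g \<in> Gamma1 m a b\<close> \<open>g \<noteq> 0\<close> show ?thesis
    by blast
qed

lemma exists_Gamma_lead_dvd:
  assumes St: "keys t \<subseteq> Svars m" and Su: "keys u \<subseteq> Svars m"
    and same_image: "Phi_exp m a b t = Phi_exp m a b u" and "t < u"
  shows "\<exists>g\<in>Gamma0 m a b \<union> Gamma1 m a b. g \<noteq> (0 :: 'k::comm_ring_1 mpoly) \<and> mon_dvd (lead_mon g) u"
proof -
  obtain v where v: "lookup t v < lookup u v" and below: "\<And>w. w < v \<Longrightarrow> lookup t w = lookup u w"
    using \<open>t < u\<close> by (auto simp: less_poly_mapping.rep_eq less_fun_def)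
  then have "v \<in> Svars m"
    using Su by (auto simp: in_keys_iff)
  then consider (T) i where "v = T i" "i \<in> {1..m}" | (X) i where "v = X i" "i \<in> {1..m}"
    | (W) "v = W m"
    unfolding Svars_eq by (auto simp: le_Suc_eq)
  then show ?thesis
  proof cases
    case T
    have "lookup t (X k) = lookup u (X k)" for k
      using below T by (simp add: less_var_def)
    with same_image T have "lookup t v = lookup u v"
      by (simp add: Phi_exp_eq_iff[OF St Su])
    with v show ?thesis
      by simp
  next
    case X
    have "lookup t (X k) = lookup u (X k)" if "i < k" for k
      using below X that by (simp add: less_var_def)
    with v X have "\<exists>g\<in>Gamma0 m a b. g \<noteq> (0 :: 'k mpoly) \<and> mon_dvd (lead_mon g) u"
      by (intro exists_Gamma0_lead_dvd[OF St Su same_image]) auto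
    then show ?thesis
      by blast
  next
    case W
    with v show ?thesis
      using exists_Gamma1_lead_dvd[OF St Su same_image] by auto
  qed
qed

theorem proposition2p1:
  fixes m :: nat and a b :: "nat \<Rightarrow> nat"
  assumes "m \<ge> 3"
    and "\<forall>i\<in>{1..m}. b i < a i"
    and "card {i\<in>{1..m}. b i \<noteq> 0} \<ge> 2"
  shows "is_groebner_basis (Gamma0 m a b \<union> Gamma1 m a b) (reesL m a b :: 'k::field mpoly set)"
  unfolding is_groebner_basis_def
proof (intro conjI ballI impI)
  show "Gamma0 m a b \<union> Gamma1 m a b \<subseteq> (reesL m a b :: 'k mpoly set)"
    using Gamma0_subset_reesL Gamma1_subset_reesL by blast
next
  fix f :: "'k mpoly"
  assume "f \<in> reesL m a b" and "f \<noteq> 0"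
  then have S: "\<forall>t\<in>keys f. keys t \<subseteq> Svars m" and "Phi m a b f = 0"
    by (simp_all add: reesL_def in_S_def)
  define u where "u = lead_mon f"
  have u: "u \<in> keys f" "\<And>s. s \<in> keys f \<Longrightarrow> s \<le> u"
    using \<open>f \<noteq> 0\<close> by (simp_all add: u_def lead_mon_eq_Max)
  then obtain t where t: "t \<in> keys f" "t \<noteq> u" "Phi_exp m a b t = Phi_exp m a b u"
    using Phi_eq_0_imp_collision[OF \<open>Phi m a b f = 0\<close>] by blast
  then have "t < u"
    using u(2) by (simp add: order.not_eq_order_implies_strict)
  with S t u(1) show "\<exists>g\<in>Gamma0 m a b \<union> Gamma1 m a b. g \<noteq> 0 \<and> mon_dvd (lead_mon g) (lead_mon f)"
    unfolding u_def[symmetric] by (intro exists_Gamma_lead_dvd) auto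
qed

end
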